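(* Let $A$ be a $\boldsymbol{\mathit{ba}\ell}$-algebra and $I$ an $\ell$-ideal of $A$. Then the archimedean hull of $I$ is $$[\![I]\!]=\{x\in A\mid (n|x|-1)^+\in I \text{ for all integers } n\ge 1\}.$$
   Context: A $\boldsymbol{\mathit{ba}\ell}$-algebra is a commutative unital lattice-ordered algebra $A$ over $\mathbb R$ that is bounded (for every $a\in A$ there is an integer $n\ge1$ with $a\le n\cdot1$) and archimedean (if $na\le b$ for all $n\ge1$ then $a\le0$); a real $r$ is identified with $r\cdot 1$. For $a\in A$: $a^+=a\vee0$, $a^-=(-a)\vee0$, $|a|=a\vee(-a)$. An $\ell$-ideal is a ring ideal $I$ such that $|a|\le|b|$ and $b\in I$ imply $a\in I$; it is archimedean if $A/I$ is archimedean. For $S\subseteq A$, the archimedean hull $[\![S]\!]$ is the intersection of all archimedean $\ell$-ideals of $A$ containing $S$. *)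

theory Defs
  imports Complex_Main "HOL-Library.Lattice_Algebras"
begin

class bal_algebra = comm_ring_1 + lattice_ring + real_algebra_1 + ordered_real_vector +
  assumes bounded: "\<exists>n::nat. n \<ge> 1 \<and> a \<le> of_nat n"
  assumes archimedean: "(\<And>n::nat. n \<ge> 1 \<Longrightarrow> of_nat n * a \<le> b) \<Longrightarrow> a \<le> 0"

definition pos_part :: "'a::lattice_ring \<Rightarrow> 'a" where
  "pos_part a = sup a 0"

definition ring_ideal :: "'a::comm_ring_1 set \<Rightarrow> bool" where
  "ring_ideal I \<longleftrightarrow> 0 \<in> I \<and> (\<forall>x\<in>I. \<forall>y\<in>I. x + y \<in> I) \<and> (\<forall>x\<in>I. - x \<in> I)
     \<and> (\<forall>a x. x \<in> I \<longrightarrow> a * x \<in> I)"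

definition l_ideal :: "'a::bal_algebra set \<Rightarrow> bool" where
  "l_ideal I \<longleftrightarrow> ring_ideal I \<and> (\<forall>a b. \<bar>a\<bar> \<le> \<bar>b\<bar> \<and> b \<in> I \<longrightarrow> a \<in> I)"

text \<open>Order on the quotient A/I, induced from the quotient lattice:
  [a] \<le> [b] iff inf [a] [b] = [a] iff (inf a b) - a \<in> I.\<close>
definition quot_le :: "'a::bal_algebra set \<Rightarrow> 'a \<Rightarrow> 'a \<Rightarrow> bool" where
  "quot_le I a b \<longleftrightarrow> inf a b - a \<in> I"

text \<open>I is archimedean iff A/I is archimedean (stated in terms of representatives).\<close>
definition archimedean_l_ideal :: "'a::bal_algebra set \<Rightarrow> bool" where
  "archimedean_l_ideal I \<longleftrightarrow> l_ideal I \<and>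
     (\<forall>a b. (\<forall>n::nat. n \<ge> 1 \<longrightarrow> quot_le I (of_nat n * a) b) \<longrightarrow> quot_le I a 0)"

definition arch_hull :: "'a::bal_algebra set \<Rightarrow> 'a set" where
  "arch_hull S = \<Inter> {I. archimedean_l_ideal I \<and> S \<subseteq> I}"

end

theory Submission imports Defs begin

text \<open>
  The set \<open>J = {x. \<forall>n\<ge>1. (n\<bar>x\<bar> - 1)\<^sup>+ \<in> I}\<close> is an \<open>\<ell>\<close>-ideal containing \<open>I\<close>, and it lies in
  every archimedean \<open>\<ell>\<close>-ideal \<open>K \<supseteq> I\<close>, because each \<open>x \<in> J\<close> satisfies \<open>n\<bar>x\<bar> \<le> 1\<close> modulo \<open>K\<close>
  for all \<open>n\<close>. It remains to see that \<open>J\<close> is itself archimedean. If \<open>na \<le> b\<close> modulo \<open>J\<close> for all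
  \<open>n\<close> and \<open>b \<le> m\<close>, then \<open>c = a\<^sup>+\<close> satisfies \<open>(kc - m)\<^sup>+ \<in> J\<close> for all \<open>k\<close>, hence
  \<open>((kc - m)\<^sup>+ - 1)\<^sup>+ \<in> I\<close>. Taking \<open>k = (m+1)n\<close> and using
  \<open>(nc - 1)\<^sup>+ \<le> (m+1)(nc - 1)\<^sup>+ = ((m+1)nc - m - 1)\<^sup>+ \<le> (((m+1)nc - m)\<^sup>+ - 1)\<^sup>+\<close>
  gives \<open>c \<in> J\<close>, i.e. \<open>a \<le> 0\<close> modulo \<open>J\<close>.
\<close>

lemma of_nat_mult_eq_scaleR: "of_nat n * x = real n *\<^sub>R (x :: 'a::real_algebra_1)"
  by (metis of_real_of_nat_eq scaleR_conv_of_real)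

lemma scaleR_sup:
  fixes a b :: "'a::{lattice_ab_group_add, ordered_real_vector}"
  assumes "0 \<le> r"
  shows "r *\<^sub>R sup a b = sup (r *\<^sub>R a) (r *\<^sub>R b)"
proof (cases "r = 0")
  case False
  with assms have r: "0 < r" by simp
  show ?thesis
  proof (rule antisym)
    define s where "s = sup (r *\<^sub>R a) (r *\<^sub>R b)"
    have s: "r *\<^sub>R (inverse r *\<^sub>R s) = s"
      using r by simp
    have "r *\<^sub>R a \<le> r *\<^sub>R (inverse r *\<^sub>R s)" "r *\<^sub>R b \<le> r *\<^sub>R (inverse r *\<^sub>R s)"
      unfolding s by (simp_all add: s_def)
    then have "a \<le> inverse r *\<^sub>R s" "b \<le> inverse r *\<^sub>R s"
      using scaleR_le_cancel_left_pos[OF r] by blast+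
    then have "sup a b \<le> inverse r *\<^sub>R s"
      by simp
    then have "r *\<^sub>R sup a b \<le> r *\<^sub>R (inverse r *\<^sub>R s)"
      by (rule scaleR_left_mono) (use r in simp)
    then have "r *\<^sub>R sup a b \<le> s"
      by (simp only: s)
    then show "r *\<^sub>R sup a b \<le> sup (r *\<^sub>R a) (r *\<^sub>R b)"
      by (simp only: s_def)
    show "sup (r *\<^sub>R a) (r *\<^sub>R b) \<le> r *\<^sub>R sup a b"
      using assms by (simp add: scaleR_left_mono)
  qed
qed simp

lemma pprt_scaleR:
  fixes a :: "'a::{lattice_ab_group_add, ordered_real_vector}"
  shows "0 \<le> r \<Longrightarrow> pprt (r *\<^sub>R a) = r *\<^sub>R pprt a"
  by (simp add: pprt_def scaleR_sup)

lemma pprt_le_scaleR_pprt: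
  fixes a :: "'a::{lattice_ab_group_add, ordered_real_vector}"
  shows "1 \<le> r \<Longrightarrow> pprt a \<le> r *\<^sub>R pprt a"
  using scaleR_right_mono[of 1 r "pprt a"] by simp

lemma pprt_diff_le_pprt_pprt_diff:
  fixes t u :: "'a::{lattice_ab_group_add, ordered_real_vector}"
  assumes "0 \<le> m"
  shows "pprt (t - u) \<le> pprt (pprt ((m + 1) *\<^sub>R t - m *\<^sub>R u) - u)"
proof -
  have "pprt (t - u) \<le> (m + 1) *\<^sub>R pprt (t - u)"
    using assms by (intro pprt_le_scaleR_pprt) simp
  also have "\<dots> = pprt ((m + 1) *\<^sub>R (t - u))"
    using assms by (simp add: pprt_scaleR)
  also have "\<dots> = pprt ((m + 1) *\<^sub>R t - m *\<^sub>R u - u)"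
    by (rule arg_cong[where f = pprt]) (simp add: algebra_simps)
  also have "\<dots> \<le> pprt (pprt ((m + 1) *\<^sub>R t - m *\<^sub>R u) - u)"
    by (intro pprt_mono diff_right_mono) (simp add: pprt_def)
  finally show ?thesis .
qed

lemma pprt_scaleR_pprt_diff_le:
  fixes a b M :: "'a::{lattice_ab_group_add, ordered_real_vector}"
  assumes "0 \<le> k" "b \<le> M" "0 \<le> M"
  shows "pprt (k *\<^sub>R pprt a - M) \<le> pprt (k *\<^sub>R a - b)"
proof -
  have "k *\<^sub>R pprt a = sup (k *\<^sub>R a) 0"
    using assms(1) by (simp add: pprt_def scaleR_sup)
  then have "k *\<^sub>R pprt a - M = sup (k *\<^sub>R a - M) (- M)"
    using add_sup_distrib_right[of "k *\<^sub>R a" 0 "- M"] by simp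
  also have "\<dots> \<le> pprt (k *\<^sub>R a - b)"
    using assms(2,3) by (auto simp: pprt_def intro: le_supI1 order_trans[of "- M" 0])
  finally show ?thesis
    by (simp add: pprt_def)
qed

text \<open>In a unital \<open>\<ell>\<close>-ring the unit need not be positive; here boundedness forces it.\<close>

lemma bal_zero_le_one: "(0::'a::bal_algebra) \<le> 1"
proof -
  define p q :: 'a where "p = pprt 1" and "q = pprt (- 1)"
  have "p - q = 1"
    using prts[of "1::'a"] by (simp add: p_def q_def pprt_neg)
  obtain n :: nat where n: "n \<ge> 1" "q \<le> of_nat n"
    using bounded by blast
  then have "q \<le> real n *\<^sub>R (p - q)"
    using \<open>p - q = 1\<close> of_nat_mult_eq_scaleR[of n "1::'a"] by simp
  then have "q + real n *\<^sub>R q \<le> real n *\<^sub>R p"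
    by (simp add: scaleR_right_diff_distrib le_diff_eq)
  moreover have "real n *\<^sub>R q \<le> q + real n *\<^sub>R q"
    by (simp add: q_def)
  ultimately have "real n *\<^sub>R q \<le> real n *\<^sub>R p"
    by (rule order.trans[rotated])
  moreover have "0 < real n"
    using n(1) by simp
  ultimately have "q \<le> p"
    using scaleR_le_cancel_left_pos by blast
  then have "0 \<le> p - q"
    by simp
  then show ?thesis
    using \<open>p - q = 1\<close> by simp
qed

lemma l_ideal_down_closed:
  "l_ideal I \<Longrightarrow> 0 \<le> a \<Longrightarrow> a \<le> b \<Longrightarrow> b \<in> I \<Longrightarrow> a \<in> I"
  unfolding l_ideal_def by (metis abs_of_nonneg order_trans)

lemma quot_le_iff_pprt_mem:
  fixes a b :: "'a::bal_algebra"
  assumes "ring_ideal I"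
  shows "quot_le I a b \<longleftrightarrow> pprt (a - b) \<in> I"
proof -
  have "inf a b - a = - pprt (a - b)"
    using add_inf_distrib_right[of a b "- a"]
    by (simp add: pprt_def neg_sup_eq_inf inf_commute)
  then show ?thesis
    using assms unfolding quot_le_def ring_ideal_def by (metis minus_minus)
qed

definition arch_closure :: "'a::bal_algebra set \<Rightarrow> 'a set" where
  "arch_closure I = {x. \<forall>n::nat. n \<ge> 1 \<longrightarrow> pprt (real n *\<^sub>R \<bar>x\<bar> - 1) \<in> I}"

lemma arch_closure_mono_scaleR:
  fixes x y :: "'a::bal_algebra"
  assumes I: "l_ideal I" and x: "x \<in> arch_closure I"
    and le: "\<bar>y\<bar> \<le> real m *\<^sub>R \<bar>x\<bar>" and m: "m \<ge> 1"
  shows "y \<in> arch_closure I"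
  unfolding arch_closure_def
proof (intro CollectI allI impI)
  fix n :: nat
  assume n: "n \<ge> 1"
  have "real n *\<^sub>R \<bar>y\<bar> \<le> real (n * m) *\<^sub>R \<bar>x\<bar>"
    using scaleR_left_mono[OF le, of "real n"] by simp
  then have "pprt (real n *\<^sub>R \<bar>y\<bar> - 1) \<le> pprt (real (n * m) *\<^sub>R \<bar>x\<bar> - 1)"
    by (intro pprt_mono diff_right_mono)
  moreover have "n * m \<ge> 1"
    using n m by simp
  then have "pprt (real (n * m) *\<^sub>R \<bar>x\<bar> - 1) \<in> I"
    using x unfolding arch_closure_def by blast
  ultimately show "pprt (real n *\<^sub>R \<bar>y\<bar> - 1) \<in> I"
    using l_ideal_down_closed[OF I] by simp
qed

lemma arch_closure_solid:
  "l_ideal I \<Longrightarrow> x \<in> arch_closure I \<Longrightarrow> \<bar>y\<bar> \<le> \<bar>x\<bar> \<Longrightarrow> y \<in> arch_closure I"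
  using arch_closure_mono_scaleR[of I x y 1] by simp

lemma arch_closure_add:
  fixes x y :: "'a::bal_algebra"
  assumes I: "l_ideal I" and x: "x \<in> arch_closure I" and y: "y \<in> arch_closure I"
  shows "x + y \<in> arch_closure I"
  unfolding arch_closure_def
proof (intro CollectI allI impI)
  fix n :: nat
  assume "n \<ge> 1"
  define S where "S = pprt (real (2 * n) *\<^sub>R \<bar>x\<bar> - 1) + pprt (real (2 * n) *\<^sub>R \<bar>y\<bar> - 1)"
  have "2 * n \<ge> 1"
    using \<open>n \<ge> 1\<close> by simp
  then have "pprt (real (2 * n) *\<^sub>R \<bar>x\<bar> - 1) \<in> I" "pprt (real (2 * n) *\<^sub>R \<bar>y\<bar> - 1) \<in> I"
    using x y unfolding arch_closure_def by blast+
  then have "S \<in> I"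
    using I unfolding S_def l_ideal_def ring_ideal_def by blast
  have "2 *\<^sub>R (real n *\<^sub>R \<bar>x + y\<bar> - 1) \<le> 2 *\<^sub>R (real n *\<^sub>R (\<bar>x\<bar> + \<bar>y\<bar>) - 1)"
    by (intro scaleR_left_mono diff_right_mono) (simp_all add: abs_triangle_ineq)
  also have "\<dots> = (real (2 * n) *\<^sub>R \<bar>x\<bar> - 1) + (real (2 * n) *\<^sub>R \<bar>y\<bar> - 1)"
    by (simp add: scaleR_2 algebra_simps)
  also have "\<dots> \<le> S"
    unfolding S_def by (intro add_mono) (simp_all add: pprt_def)
  finally have "pprt (2 *\<^sub>R (real n *\<^sub>R \<bar>x + y\<bar> - 1)) \<le> S"
    by (simp add: pprt_def S_def)
  then have "pprt (real n *\<^sub>R \<bar>x + y\<bar> - 1) \<le> S"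
    using pprt_le_scaleR_pprt[of 2 "real n *\<^sub>R \<bar>x + y\<bar> - 1"] by (simp add: pprt_scaleR)
  then show "pprt (real n *\<^sub>R \<bar>x + y\<bar> - 1) \<in> I"
    using l_ideal_down_closed[OF I] \<open>S \<in> I\<close> by simp
qed

lemma subset_arch_closure:
  assumes I: "l_ideal I"
  shows "I \<subseteq> arch_closure I"
proof
  fix x
  assume "x \<in> I"
  then have "\<bar>x\<bar> \<in> I"
    using I unfolding l_ideal_def by (metis abs_idempotent order_refl)
  then have "of_nat n * \<bar>x\<bar> \<in> I" for n
    using I unfolding l_ideal_def ring_ideal_def by blast
  then have nx: "real n *\<^sub>R \<bar>x\<bar> \<in> I" for n
    by (simp add: of_nat_mult_eq_scaleR)
  have "pprt (real n *\<^sub>R \<bar>x\<bar> - 1) \<le> real n *\<^sub>R \<bar>x\<bar>" for n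
    using bal_zero_le_one by (simp add: pprt_def scaleR_nonneg_nonneg)
  then have "pprt (real n *\<^sub>R \<bar>x\<bar> - 1) \<in> I" for n
    using l_ideal_down_closed[OF I zero_le_pprt] nx by blast
  then show "x \<in> arch_closure I"
    unfolding arch_closure_def by blast
qed

lemma l_ideal_arch_closure:
  assumes I: "l_ideal I"
  shows "l_ideal (arch_closure I)"
  unfolding l_ideal_def ring_ideal_def
proof (intro conjI ballI allI impI)
  show "0 \<in> arch_closure I"
    using subset_arch_closure[OF I] I unfolding l_ideal_def ring_ideal_def by blast
  fix x
  assume x: "x \<in> arch_closure I"
  show "- x \<in> arch_closure I"
    using arch_closure_solid[OF I x] by simp
  show "x + y \<in> arch_closure I" if "y \<in> arch_closure I" for y
    using arch_closure_add[OF I x that] .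
  show "a * x \<in> arch_closure I" for a
  proof -
    obtain m :: nat where m: "m \<ge> 1" "\<bar>a\<bar> \<le> of_nat m"
      using bounded by blast
    have "\<bar>a * x\<bar> \<le> \<bar>a\<bar> * \<bar>x\<bar>"
      by (rule abs_le_mult)
    also have "\<dots> \<le> of_nat m * \<bar>x\<bar>"
      using m(2) by (intro mult_right_mono) auto
    finally show ?thesis
      using arch_closure_mono_scaleR[OF I x _ m(1)] by (simp add: of_nat_mult_eq_scaleR)
  qed
next
  show "a \<in> arch_closure I" if "\<bar>a\<bar> \<le> \<bar>b\<bar> \<and> b \<in> arch_closure I" for a b
    using arch_closure_solid[OF I] that by blast
qed

lemma mem_arch_closure_if_multiples_bounded:
  fixes c :: "'a::bal_algebra"
  assumes I: "l_ideal I" and "0 \<le> c"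
    and bounded_multiples: "\<And>k::nat. k \<ge> 1 \<Longrightarrow> pprt (real k *\<^sub>R c - real m *\<^sub>R 1) \<in> arch_closure I"
  shows "c \<in> arch_closure I"
  unfolding arch_closure_def
proof (intro CollectI allI impI)
  fix n :: nat
  assume "n \<ge> 1"
  let ?k = "(m + 1) * n"
  have "?k \<ge> 1"
    using \<open>n \<ge> 1\<close> by simp
  then have "pprt (real ?k *\<^sub>R c - real m *\<^sub>R 1) \<in> arch_closure I"
    by (rule bounded_multiples)
  then have "pprt (real 1 *\<^sub>R \<bar>pprt (real ?k *\<^sub>R c - real m *\<^sub>R 1)\<bar> - 1) \<in> I"
    unfolding arch_closure_def by blast
  then have "pprt (pprt (real ?k *\<^sub>R c - real m *\<^sub>R 1) - 1) \<in> I"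
    by simp
  moreover have "pprt (real n *\<^sub>R c - 1) \<le> pprt (pprt (real ?k *\<^sub>R c - real m *\<^sub>R 1) - 1)"
    using pprt_diff_le_pprt_pprt_diff[of "real m" "real n *\<^sub>R c" 1] by (simp add: algebra_simps)
  ultimately show "pprt (real n *\<^sub>R \<bar>c\<bar> - 1) \<in> I"
    using l_ideal_down_closed[OF I] \<open>0 \<le> c\<close> by simp
qed

lemma archimedean_arch_closure:
  fixes I :: "'a::bal_algebra set"
  assumes I: "l_ideal I"
  shows "archimedean_l_ideal (arch_closure I)"
  unfolding archimedean_l_ideal_def
proof (intro conjI allI impI)
  have J: "l_ideal (arch_closure I)"
    by (rule l_ideal_arch_closure[OF I])
  then have RJ: "ring_ideal (arch_closure I)"
    by (simp add: l_ideal_def)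
  show "l_ideal (arch_closure I)"
    by (rule J)
  fix a b :: 'a
  assume H: "\<forall>n::nat. n \<ge> 1 \<longrightarrow> quot_le (arch_closure I) (of_nat n * a) b"
  obtain m :: nat where m: "b \<le> of_nat m"
    using bounded by blast
  have "pprt (real k *\<^sub>R pprt a - real m *\<^sub>R 1) \<in> arch_closure I" if "k \<ge> 1" for k :: nat
  proof -
    have "quot_le (arch_closure I) (of_nat k * a) b"
      using H that by blast
    then have "pprt (real k *\<^sub>R a - b) \<in> arch_closure I"
      using quot_le_iff_pprt_mem[OF RJ] by (simp add: of_nat_mult_eq_scaleR)
    moreover have "pprt (real k *\<^sub>R pprt a - real m *\<^sub>R 1) \<le> pprt (real k *\<^sub>R a - b)"
    proof (rule pprt_scaleR_pprt_diff_le)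
      show "b \<le> real m *\<^sub>R 1"
        using m of_nat_mult_eq_scaleR[of m "1::'a"] by simp
      show "0 \<le> real m *\<^sub>R (1::'a)"
        by (rule scaleR_nonneg_nonneg) (simp_all add: bal_zero_le_one)
    qed simp
    ultimately show ?thesis
      using l_ideal_down_closed[OF J] by simp
  qed
  then have "pprt a \<in> arch_closure I"
    by (rule mem_arch_closure_if_multiples_bounded[OF I zero_le_pprt])
  then show "quot_le (arch_closure I) a 0"
    using quot_le_iff_pprt_mem[OF RJ] by simp
qed

lemma arch_closure_subset:
  assumes K: "archimedean_l_ideal K" and "I \<subseteq> K"
  shows "arch_closure I \<subseteq> K"
proof
  fix x
  assume x: "x \<in> arch_closure I"
  have RK: "ring_ideal K"
    using K by (simp add: archimedean_l_ideal_def l_ideal_def)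
  have "quot_le K (of_nat n * \<bar>x\<bar>) 1" if "n \<ge> 1" for n :: nat
    using x that \<open>I \<subseteq> K\<close> quot_le_iff_pprt_mem[OF RK]
    unfolding arch_closure_def by (auto simp: of_nat_mult_eq_scaleR)
  then have "\<bar>x\<bar> \<in> K"
    using K quot_le_iff_pprt_mem[OF RK] unfolding archimedean_l_ideal_def by fastforce
  then show "x \<in> K"
    using K unfolding archimedean_l_ideal_def l_ideal_def by (metis abs_idempotent order_refl)
qed

theorem mainTheorem4:
  fixes I :: "'a::bal_algebra set"
  assumes "l_ideal I"
  shows "arch_hull I = {x. \<forall>n::nat. n \<ge> 1 \<longrightarrow> pos_part (of_nat n * \<bar>x\<bar> - 1) \<in> I}"
proof -
  have "arch_hull I = arch_closure I"
  proof (rule antisym)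
    show "arch_hull I \<subseteq> arch_closure I"
      unfolding arch_hull_def
      using archimedean_arch_closure[OF assms] subset_arch_closure[OF assms] by blast
    show "arch_closure I \<subseteq> arch_hull I"
      unfolding arch_hull_def using arch_closure_subset by blast
  qed
  then show ?thesis
    by (simp add: arch_closure_def of_nat_mult_eq_scaleR pos_part_def pprt_def)
qed

end
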